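(* Let $p$ be a prime, $C\subseteq\mathbb{F}_p^{2n}$ a symplectic self-orthogonal code with stabilizer code $Q(C)\subseteq\mathbb{C}^{p^n}$, and $J\subsetneq\{1,\dots,n\}$. Let $\overline J=\{1,\dots,n\}\setminus J$, let $|\varphi\rangle\in Q(C)$ and $\sigma=\mathrm{tr}_{\overline J}[|\varphi\rangle\langle\varphi|]$. Let $Q(\sigma_J(C))\subseteq\mathbb{C}^{p^{|J|}}$ be the stabilizer code defined by the shortened code $\sigma_J(C)$, with the character chosen so that for every $\mathbf z\in\sigma_J(C)$ and the vector $\mathbf y\in C$ with $\pi_J(\mathbf y)=\mathbf z$ and zero coordinates outside $J$, $\lambda(E_{\mathbf z})=\lambda(E_{\mathbf y})$. Then the column space of $\sigma$ satisfies $\mathrm{col}(\sigma)\subseteq Q(\sigma_J(C))$.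
   Context: Vectors of $\mathbb{F}_p^{2m}$ are written $(\mathbf a|\mathbf b)$, $\mathbf a,\mathbf b\in\mathbb F_p^m$, with coordinate pairs $(a_j,b_j)$ indexed by a set of size $m$. The symplectic form is $(\mathbf a|\mathbf b)\cdot_s(\mathbf c|\mathbf d)=\mathbf a\cdot\mathbf d-\mathbf b\cdot\mathbf c$; $C^{\perp_s}$ is the dual, and $C$ is symplectic self-orthogonal if $C\subseteq C^{\perp_s}$. For $R\subseteq\{1,\dots,n\}$, $\pi_R(\mathbf a|\mathbf b)=(a_j|b_j)_{j\in R}$ and $\sigma_R(D)=\{\pi_R(\mathbf y):\mathbf y=(\mathbf a|\mathbf b)\in D,\ \mathrm{supp}(\mathbf a)\cup\mathrm{supp}(\mathbf b)\subseteq R\}$. Let $\xi=e^{2\pi\iota/p}$, $X(a)|x\rangle=|x+a\rangle$, $Z(b)|x\rangle=\xi^{bx}|x\rangle$ on $\mathbb C^p$, and $E_{(\mathbf a,\mathbf b)}=\bigotimes_j X(a_j)Z(b_j)$. For a symplectic self-orthogonal code $D\subseteq\mathbb F_p^{2m}$, the stabilizer code $Q(D)\subseteq\mathbb C^{p^m}$ is the common eigenspace $\{v:Ev=\lambda(E)v\ \forall E\in S\}$, where $S$ is the commutative group generated by scalars $\xi^\ell\mathcal I$ and the $E_{\mathbf y}$, $\mathbf y\in D$, and $\lambda$ is a character of $S$ with $\lambda(\xi\mathcal I)=\xi$. $\mathrm{tr}_{\overline J}$ is the partial trace over the qudits indexed by $\overline J$. *)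

theory Defs
  imports Complex_Main "HOL-Computational_Algebra.Primes"
begin

text \<open>Qudit basis states over an index set I: functions x with x i < p for i in I and x i = 0
  outside I (so the space C^(p^|I|) is the space of complex functions on these states).
  Vectors (a|b) of F_p^(2|I|) are pairs of functions with values in {0..<p} on I, zero outside I.\<close>

type_synonym st = "nat \<Rightarrow> nat"
type_synonym fv = "(nat \<Rightarrow> nat) \<times> (nat \<Rightarrow> nat)"
type_synonym op = "st \<Rightarrow> st \<Rightarrow> complex"

definition xi :: "nat \<Rightarrow> complex" where
  "xi p = cis (2 * pi / real p)"

definition basis :: "nat set \<Rightarrow> nat \<Rightarrow> st set" where
  "basis I p = {x. (\<forall>i\<in>I. x i < p) \<and> (\<forall>i. i \<notin> I \<longrightarrow> x i = 0)}"

definition fvecs :: "nat set \<Rightarrow> nat \<Rightarrow> fv set" where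
  "fvecs I p = {(a, b). (\<forall>i\<in>I. a i < p \<and> b i < p) \<and> (\<forall>i. i \<notin> I \<longrightarrow> a i = 0 \<and> b i = 0)}"

fun vadd :: "nat \<Rightarrow> fv \<Rightarrow> fv \<Rightarrow> fv" where
  "vadd p (a, b) (c, d) = (\<lambda>i. (a i + c i) mod p, \<lambda>i. (b i + d i) mod p)"

fun smul :: "nat \<Rightarrow> nat \<Rightarrow> fv \<Rightarrow> fv" where
  "smul p k (a, b) = (\<lambda>i. (k * a i) mod p, \<lambda>i. (k * b i) mod p)"

definition is_code :: "nat set \<Rightarrow> nat \<Rightarrow> fv set \<Rightarrow> bool" where
  "is_code I p C \<longleftrightarrow> C \<subseteq> fvecs I p \<and> (\<lambda>i. 0, \<lambda>i. 0) \<in> C \<and>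
     (\<forall>y\<in>C. \<forall>z\<in>C. vadd p y z \<in> C) \<and> (\<forall>k. \<forall>y\<in>C. smul p k y \<in> C)"

fun symp :: "nat set \<Rightarrow> nat \<Rightarrow> fv \<Rightarrow> fv \<Rightarrow> int" where
  "symp I p (a, b) (c, d) = (\<Sum>i\<in>I. int (a i * d i) - int (b i * c i)) mod int p"

definition symp_self_orth :: "nat set \<Rightarrow> nat \<Rightarrow> fv set \<Rightarrow> bool" where
  "symp_self_orth I p C \<longleftrightarrow> is_code I p C \<and> (\<forall>y\<in>C. \<forall>z\<in>C. symp I p y z = 0)"

fun proj :: "nat set \<Rightarrow> fv \<Rightarrow> fv" where
  "proj R (a, b) = (\<lambda>i. if i \<in> R then a i else 0, \<lambda>i. if i \<in> R then b i else 0)"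

fun supp_in :: "nat set \<Rightarrow> fv \<Rightarrow> bool" where
  "supp_in R (a, b) \<longleftrightarrow> (\<forall>i. i \<notin> R \<longrightarrow> a i = 0 \<and> b i = 0)"

definition shorten :: "nat set \<Rightarrow> fv set \<Rightarrow> fv set" where
  "shorten R D = {proj R y | y. y \<in> D \<and> supp_in R y}"

text \<open>Operators are matrices indexed by basis states (entry K y x = <y|K|x>), zero outside.
  E_(a,b) = tensor of X(a_j) Z(b_j), with X(a)Z(b)|x> = xi^(b x) |x + a>.\<close>
fun Eop :: "nat set \<Rightarrow> nat \<Rightarrow> fv \<Rightarrow> op" where
  "Eop I p (a, b) = (\<lambda>y x. if y \<in> basis I p \<and> x \<in> basis I p \<and> (\<forall>i\<in>I. y i = (x i + a i) mod p)
        then xi p ^ (\<Sum>i\<in>I. b i * x i) else 0)"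

definition idop :: "nat set \<Rightarrow> nat \<Rightarrow> op" where
  "idop I p = (\<lambda>y x. if y \<in> basis I p \<and> y = x then 1 else 0)"

definition opmul :: "nat set \<Rightarrow> nat \<Rightarrow> op \<Rightarrow> op \<Rightarrow> op" where
  "opmul I p K L = (\<lambda>y x. \<Sum>z\<in>basis I p. K y z * L z x)"

definition scal :: "complex \<Rightarrow> op \<Rightarrow> op" where
  "scal c K = (\<lambda>y x. c * K y x)"

text \<open>The group S generated by the scalars xi^l I and the E_y, y in D
  (a finite set of operators of finite order, so closure under products suffices).\<close>
inductive_set stab_group :: "nat set \<Rightarrow> nat \<Rightarrow> fv set \<Rightarrow> op set" for I p D where
  scalar: "scal (xi p ^ l) (idop I p) \<in> stab_group I p D"
| gen: "y \<in> D \<Longrightarrow> Eop I p y \<in> stab_group I p D"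
| mult: "A \<in> stab_group I p D \<Longrightarrow> B \<in> stab_group I p D \<Longrightarrow> opmul I p A B \<in> stab_group I p D"

definition is_character :: "nat set \<Rightarrow> nat \<Rightarrow> fv set \<Rightarrow> (op \<Rightarrow> complex) \<Rightarrow> bool" where
  "is_character I p D lam \<longleftrightarrow>
     (\<forall>A\<in>stab_group I p D. \<forall>B\<in>stab_group I p D. lam (opmul I p A B) = lam A * lam B) \<and>
     (\<forall>A\<in>stab_group I p D. lam A \<noteq> 0) \<and>
     lam (scal (xi p) (idop I p)) = xi p"

definition is_vec :: "nat set \<Rightarrow> nat \<Rightarrow> (st \<Rightarrow> complex) \<Rightarrow> bool" where
  "is_vec I p v \<longleftrightarrow> (\<forall>x. x \<notin> basis I p \<longrightarrow> v x = 0)"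

definition opapp :: "nat set \<Rightarrow> nat \<Rightarrow> op \<Rightarrow> (st \<Rightarrow> complex) \<Rightarrow> (st \<Rightarrow> complex)" where
  "opapp I p K v = (\<lambda>y. \<Sum>x\<in>basis I p. K y x * v x)"

definition stab_code :: "nat set \<Rightarrow> nat \<Rightarrow> fv set \<Rightarrow> (op \<Rightarrow> complex) \<Rightarrow> (st \<Rightarrow> complex) set" where
  "stab_code I p D lam = {v. is_vec I p v \<and>
      (\<forall>E\<in>stab_group I p D. opapp I p E v = (\<lambda>x. lam E * v x))}"

definition outer :: "(st \<Rightarrow> complex) \<Rightarrow> op" where
  "outer phi = (\<lambda>y x. phi y * cnj (phi x))"

definition merge :: "nat set \<Rightarrow> st \<Rightarrow> st \<Rightarrow> st" where
  "merge K u w = (\<lambda>i. if i \<in> K then u i else w i)"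

definition ptrace :: "nat set \<Rightarrow> nat \<Rightarrow> nat set \<Rightarrow> op \<Rightarrow> op" where
  "ptrace I p T rho = (\<lambda>y x. if y \<in> basis (I - T) p \<and> x \<in> basis (I - T) p
      then (\<Sum>w\<in>basis T p. rho (merge (I - T) y w) (merge (I - T) x w)) else 0)"

definition colspace :: "nat set \<Rightarrow> nat \<Rightarrow> op \<Rightarrow> (st \<Rightarrow> complex) set" where
  "colspace I p K = {opapp I p K v | v. is_vec I p v}"

end

theory Submission
  imports Defs "HOL-Library.FuncSet"
begin

text \<open>Write \<open>\<phi>\<^sub>w\<close> for the slice \<open>x \<mapsto> \<phi>(x, w)\<close> of \<open>\<phi>\<close> at a basis state \<open>w\<close> of the traced-out
  qudits. If \<open>y \<in> C\<close> is supported on \<open>J\<close>, then \<open>E\<^sub>y\<close> acts trivially on those qudits, so each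
  slice \<open>\<phi>\<^sub>w\<close> is an eigenvector of \<open>E\<^bsub>\<pi>\<^sub>J y\<^esub>\<close> with the eigenvalue \<open>\<lambda>(E\<^sub>y)\<close> of \<open>\<phi>\<close>. The reduced
  state \<open>\<sigma> = \<Sum>\<^sub>w \<phi>\<^sub>w \<phi>\<^sub>w\<^sup>*\<close> maps every vector into the span of the slices, so its column space
  consists of common eigenvectors of the generators of the shortened code, and the
  character property extends this to the whole stabilizer group.\<close>

lemma finite_basis:
  assumes "finite I"
  shows "finite (basis I p)"
proof -
  let ?extend = "\<lambda>f i. if i \<in> I then f i else 0"
  have "basis I p \<subseteq> ?extend ` PiE I (\<lambda>_. {..<p})"
  proof
    fix x assume x: "x \<in> basis I p"
    then have "x = ?extend (restrict x I)" "restrict x I \<in> PiE I (\<lambda>_. {..<p})"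
      unfolding basis_def by auto
    then show "x \<in> ?extend ` PiE I (\<lambda>_. {..<p})" by blast
  qed
  moreover have "finite (?extend ` PiE I (\<lambda>_. {..<p}))"
    using assms by (intro finite_imageI finite_PiE) auto
  ultimately show ?thesis by (rule finite_subset)
qed

lemma merge_in_basis:
  assumes "J \<subseteq> I" "z \<in> basis J p" "w \<in> basis (I - J) p"
  shows "merge J z w \<in> basis I p"
  using assms unfolding basis_def merge_def by auto

lemma inj_on_merge:
  "inj_on (\<lambda>x. merge J x w) (basis J p)"
proof (rule inj_onI, rule ext)
  fix x x' i
  assume x: "x \<in> basis J p" and x': "x' \<in> basis J p" and eq: "merge J x w = merge J x' w"
  show "x i = x' i"
  proof (cases "i \<in> J")
    case True
    then show ?thesis using fun_cong[OF eq, of i] by (simp add: merge_def)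
  next
    case False
    then show ?thesis using x x' by (simp add: basis_def)
  qed
qed

lemma opapp_opmul:
  "opapp I p (opmul I p A B) u = opapp I p A (opapp I p B u)"
  unfolding opapp_def opmul_def
  by (auto simp: sum_distrib_left sum_distrib_right mult.assoc intro: sum.swap)

lemma opapp_cmult:
  "opapp I p A (\<lambda>x. c * u x) = (\<lambda>x. c * opapp I p A u x)"
  unfolding opapp_def by (simp add: sum_distrib_left mult_ac)

lemma opapp_scal_idop:
  assumes "finite (basis I p)" "is_vec I p v"
  shows "opapp I p (scal c (idop I p)) v = (\<lambda>x. c * v x)"
proof
  fix y
  have "opapp I p (scal c (idop I p)) v y
      = (\<Sum>x\<in>basis I p. if x = y then (if y \<in> basis I p then c * v y else 0) else 0)"
    unfolding opapp_def scal_def idop_def by (intro sum.cong) auto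
  also have "\<dots> = c * v y"
    using assms unfolding is_vec_def by simp
  finally show "opapp I p (scal c (idop I p)) v y = c * v y" .
qed

lemma opmul_scal_idop:
  assumes "finite (basis I p)"
  shows "opmul I p (scal c (idop I p)) (scal d (idop I p)) = scal (c * d) (idop I p)"
proof (intro ext)
  fix y x
  have "opmul I p (scal c (idop I p)) (scal d (idop I p)) y x
      = (\<Sum>z\<in>basis I p. if z = y then (if y \<in> basis I p \<and> y = x then c * d else 0) else 0)"
    unfolding opmul_def by (intro sum.cong) (auto simp: scal_def idop_def)
  also have "\<dots> = scal (c * d) (idop I p) y x"
    using assms by (simp add: scal_def idop_def)
  finally show "opmul I p (scal c (idop I p)) (scal d (idop I p)) y x = scal (c * d) (idop I p) y x" .
qed

lemma character_scal_power:
  assumes "is_character I p D lam" "finite (basis I p)"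
  shows "lam (scal (xi p ^ l) (idop I p)) = xi p ^ l"
proof (induction l)
  case 0
  let ?e = "scal (xi p ^ 0) (idop I p)"
  have "?e \<in> stab_group I p D" by (rule stab_group.scalar)
  moreover have "opmul I p ?e ?e = ?e"
    using opmul_scal_idop[OF assms(2)] by simp
  ultimately have "lam ?e = lam ?e * lam ?e" "lam ?e \<noteq> 0"
    using assms(1) unfolding is_character_def by metis+
  then show ?case by simp
next
  case (Suc l)
  let ?s = "\<lambda>k. scal (xi p ^ k) (idop I p)"
  have "?s (Suc l) = opmul I p (?s 1) (?s l)"
    using opmul_scal_idop[OF assms(2)] by simp
  moreover have "?s 1 \<in> stab_group I p D" "?s l \<in> stab_group I p D"
    by (rule stab_group.scalar)+
  ultimately have "lam (?s (Suc l)) = lam (?s 1) * lam (?s l)"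
    using assms(1) unfolding is_character_def by metis
  then show ?case using Suc assms(1) unfolding is_character_def by simp
qed

lemma stab_code_if_generators:
  assumes lam: "is_character I p D lam" and fin: "finite (basis I p)" and v: "is_vec I p v"
    and generators: "\<And>y. y \<in> D \<Longrightarrow> opapp I p (Eop I p y) v = (\<lambda>x. lam (Eop I p y) * v x)"
  shows "v \<in> stab_code I p D lam"
proof -
  have "opapp I p E v = (\<lambda>x. lam E * v x)" if "E \<in> stab_group I p D" for E
    using that
  proof (induction rule: stab_group.induct)
    case (scalar l)
    then show ?case
      using opapp_scal_idop[OF fin v] character_scal_power[OF lam fin] by simp
  next
    case (gen y)
    then show ?case by (rule generators)
  next
    case (mult A B)
    then have "opapp I p (opmul I p A B) v = (\<lambda>x. lam B * (lam A * v x))"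
      by (simp add: opapp_opmul opapp_cmult)
    then show ?case
      using lam mult.hyps unfolding is_character_def by (simp add: mult_ac)
  qed
  then show ?thesis
    unfolding stab_code_def using v by blast
qed

lemma Eop_merge:
  assumes "J \<subseteq> I" "finite I" "supp_in J (a, b)" "z \<in> basis J p" "x \<in> basis J p"
    "w \<in> basis (I - J) p"
  shows "Eop I p (a, b) (merge J z w) (merge J x w) = Eop J p (proj J (a, b)) z x"
proof -
  have shift: "(\<forall>i\<in>I. merge J z w i = (merge J x w i + a i) mod p)
        \<longleftrightarrow> (\<forall>i\<in>J. z i = (x i + (if i \<in> J then a i else 0)) mod p)"
    using assms unfolding merge_def basis_def by auto
  have "(\<Sum>i\<in>I. b i * merge J x w i) = (\<Sum>i\<in>J. b i * merge J x w i)"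
    using assms by (intro sum.mono_neutral_right) auto
  then have phase: "(\<Sum>i\<in>I. b i * merge J x w i) = (\<Sum>i\<in>J. (if i \<in> J then b i else 0) * x i)"
    unfolding merge_def by simp
  show ?thesis
    using shift phase merge_in_basis[OF assms(1,4,6)] merge_in_basis[OF assms(1,5,6)] assms(4,5)
    by simp
qed

lemma Eop_nonzero_merge:
  assumes "J \<subseteq> I" "supp_in J (a, b)" "w \<in> basis (I - J) p"
    and "Eop I p (a, b) (merge J z w) x \<noteq> 0"
  shows "x \<in> (\<lambda>x'. merge J x' w) ` basis J p"
proof
  from assms(4) have x: "x \<in> basis I p" and shift: "\<forall>i\<in>I. merge J z w i = (x i + a i) mod p"
    by (metis Eop.simps)+
  show "x = merge J (\<lambda>i. if i \<in> J then x i else 0) w"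
  proof
    fix i
    show "x i = merge J (\<lambda>i. if i \<in> J then x i else 0) w i"
      using shift assms(2,3) x unfolding basis_def merge_def
      by (cases "i \<in> J"; cases "i \<in> I") auto
  qed
  show "(\<lambda>i. if i \<in> J then x i else 0) \<in> basis J p"
    using x assms(1) unfolding basis_def by auto
qed

lemma Eop_proj_slice_eigen:
  assumes JI: "J \<subseteq> I" and fin: "finite I" and supp: "supp_in J y"
    and eig: "opapp I p (Eop I p y) phi = (\<lambda>x. L * phi x)"
    and z: "z \<in> basis J p" and w: "w \<in> basis (I - J) p"
  shows "(\<Sum>x\<in>basis J p. Eop J p (proj J y) z x * phi (merge J x w)) = L * phi (merge J z w)"
proof -
  obtain a b where y: "y = (a, b)" by (cases y)
  let ?slice = "(\<lambda>x. merge J x w) ` basis J p"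
  have "L * phi (merge J z w) = (\<Sum>x\<in>basis I p. Eop I p (a, b) (merge J z w) x * phi x)"
    using fun_cong[OF eig, of "merge J z w"] unfolding opapp_def y by simp
  also have "\<dots> = (\<Sum>x\<in>?slice. Eop I p (a, b) (merge J z w) x * phi x)"
  proof (rule sum.mono_neutral_right)
    show "finite (basis I p)" using fin by (rule finite_basis)
    show "?slice \<subseteq> basis I p" using merge_in_basis[OF JI _ w] by blast
    show "\<forall>x\<in>basis I p - ?slice. Eop I p (a, b) (merge J z w) x * phi x = 0"
      using Eop_nonzero_merge[OF JI _ w, of a b z] supp y by (metis DiffE mult_eq_0_iff)
  qed
  also have "\<dots> = (\<Sum>x\<in>basis J p. Eop I p (a, b) (merge J z w) (merge J x w) * phi (merge J x w))"
    by (simp add: sum.reindex inj_on_merge)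
  also have "\<dots> = (\<Sum>x\<in>basis J p. Eop J p (proj J y) z x * phi (merge J x w))"
    using Eop_merge[OF JI fin _ z _ w] supp y by (intro sum.cong) auto
  finally show ?thesis by simp
qed

lemma is_vec_opapp_ptrace:
  assumes "J \<subseteq> I"
  shows "is_vec J p (opapp J p (ptrace I p (I - J) rho) v)"
proof -
  have "ptrace I p (I - J) rho y x = 0" if "y \<notin> basis J p" for y x
    using that double_diff[OF assms subset_refl] unfolding ptrace_def by simp
  then show ?thesis
    unfolding is_vec_def opapp_def by simp
qed

lemma opapp_ptrace_outer:
  assumes "J \<subseteq> I" "z \<in> basis J p"
  shows "opapp J p (ptrace I p (I - J) (outer phi)) v z
    = (\<Sum>w\<in>basis (I - J) p. (\<Sum>x\<in>basis J p. cnj (phi (merge J x w)) * v x) * phi (merge J z w))"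
proof -
  have "opapp J p (ptrace I p (I - J) (outer phi)) v z
      = (\<Sum>x\<in>basis J p. (\<Sum>w\<in>basis (I - J) p. phi (merge J z w) * cnj (phi (merge J x w))) * v x)"
    unfolding opapp_def ptrace_def outer_def double_diff[OF assms(1) subset_refl]
    using assms(2) by (intro sum.cong) auto
  also have "\<dots> = (\<Sum>x\<in>basis J p. \<Sum>w\<in>basis (I - J) p. phi (merge J z w) * cnj (phi (merge J x w)) * v x)"
    by (simp add: sum_distrib_right)
  also have "\<dots> = (\<Sum>w\<in>basis (I - J) p. \<Sum>x\<in>basis J p. phi (merge J z w) * cnj (phi (merge J x w)) * v x)"
    by (rule sum.swap)
  also have "\<dots> = (\<Sum>w\<in>basis (I - J) p. (\<Sum>x\<in>basis J p. cnj (phi (merge J x w)) * v x) * phi (merge J z w))"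
    by (simp add: sum_distrib_left sum_distrib_right mult_ac)
  finally show ?thesis .
qed

lemma opapp_ptrace_outer_eigen:
  fixes v :: "st \<Rightarrow> complex"
  assumes JI: "J \<subseteq> I" and fin: "finite I" and supp: "supp_in J y"
    and eig: "opapp I p (Eop I p y) phi = (\<lambda>x. L * phi x)"
  defines "u \<equiv> opapp J p (ptrace I p (I - J) (outer phi)) v"
  shows "opapp J p (Eop J p (proj J y)) u = (\<lambda>z. L * u z)"
proof
  fix z
  let ?c = "\<lambda>w. \<Sum>x\<in>basis J p. cnj (phi (merge J x w)) * v x"
  have u_slices: "u x = (\<Sum>w\<in>basis (I - J) p. ?c w * phi (merge J x w))" if "x \<in> basis J p" for x
    unfolding u_def using opapp_ptrace_outer[OF JI that] .
  show "opapp J p (Eop J p (proj J y)) u z = L * u z"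
  proof (cases "z \<in> basis J p")
    case True
    have "opapp J p (Eop J p (proj J y)) u z
        = (\<Sum>x\<in>basis J p. Eop J p (proj J y) z x * (\<Sum>w\<in>basis (I - J) p. ?c w * phi (merge J x w)))"
      unfolding opapp_def by (intro sum.cong) (simp_all add: u_slices)
    also have "\<dots> = (\<Sum>w\<in>basis (I - J) p. ?c w * (\<Sum>x\<in>basis J p. Eop J p (proj J y) z x * phi (merge J x w)))"
      unfolding sum_distrib_left by (subst sum.swap) (simp add: mult_ac)
    also have "\<dots> = (\<Sum>w\<in>basis (I - J) p. ?c w * (L * phi (merge J z w)))"
      using Eop_proj_slice_eigen[OF JI fin supp eig True] by simp
    also have "\<dots> = L * u z"
      unfolding u_slices[OF True] by (simp add: sum_distrib_left mult_ac)
    finally show ?thesis .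
  next
    case False
    then have "Eop J p (proj J y) z x = 0" for x
      by (cases "proj J y") simp
    then show ?thesis
      using False is_vec_opapp_ptrace[OF JI] unfolding u_def is_vec_def opapp_def by simp
  qed
qed

theorem proposition12:
  fixes p n :: nat and C :: "fv set" and J :: "nat set"
    and phi :: "st \<Rightarrow> complex" and lam lam' :: "op \<Rightarrow> complex"
  assumes "prime p"
    and "symp_self_orth {1..n} p C"
    and "J \<subset> {1..n}"
    and "is_character {1..n} p C lam"
    and "phi \<in> stab_code {1..n} p C lam"
    and "is_character J p (shorten J C) lam'"
    and "\<forall>y\<in>C. supp_in J y \<longrightarrow> lam' (Eop J p (proj J y)) = lam (Eop {1..n} p y)"
  shows "colspace J p (ptrace {1..n} p ({1..n} - J) (outer phi))
           \<subseteq> stab_code J p (shorten J C) lam'"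
proof
  fix u assume "u \<in> colspace J p (ptrace {1..n} p ({1..n} - J) (outer phi))"
  then obtain v where u: "u = opapp J p (ptrace {1..n} p ({1..n} - J) (outer phi)) v"
    unfolding colspace_def by blast
  have JI: "J \<subseteq> {1..n}" using assms(3) by blast
  show "u \<in> stab_code J p (shorten J C) lam'"
  proof (rule stab_code_if_generators[OF assms(6)])
    show "finite (basis J p)"
      using JI by (intro finite_basis) (auto intro: finite_subset)
    show "is_vec J p u"
      unfolding u by (rule is_vec_opapp_ptrace[OF JI])
    fix z assume "z \<in> shorten J C"
    then obtain y where "z = proj J y" and "y \<in> C" "supp_in J y"
      unfolding shorten_def by blast
    moreover from \<open>y \<in> C\<close> have "opapp {1..n} p (Eop {1..n} p y) phi = (\<lambda>x. lam (Eop {1..n} p y) * phi x)"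
      using assms(5) stab_group.gen unfolding stab_code_def by blast
    ultimately show "opapp J p (Eop J p z) u = (\<lambda>x. lam' (Eop J p z) * u x)"
      using opapp_ptrace_outer_eigen[OF JI _ \<open>supp_in J y\<close>] assms(7) unfolding u by simp
  qed
qed

end
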